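(* Let $P$ be a Poisson tensor on $\mathbb{R}^3$, let $H\in C^\infty(\mathbb{R}^3)$, let $S\in C^\infty(\mathbb{R}^3)$ satisfy $PdS=0$, and let $g$ be the symmetric tensor with components $g^{ij}=H^iH^j-\delta^{ij}\sum_k H^kH^k$. Then the system $\dot{x}=PdH+gdS$ and the Hamiltonian system $\dot{x}=PdH$ have the same regular equilibria, i.e. for every point $x$ with $P(x)\neq 0$, $x$ is an equilibrium of one system if and only if it is an equilibrium of the other.
   Context: $\mathbb{R}^3$ carries the standard Euclidean metric, used to identify tangent and cotangent spaces with $\mathbb{R}^3$; $H^i=H_i=\partial H/\partial x^i$. A Poisson tensor is a skew-symmetric bivector field satisfying the Jacobi identity. A regular equilibrium is an equilibrium point $x$ with $P(x)\neq 0$. *)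

theory Defs
  imports "HOL-Analysis.Analysis"
begin

type_synonym R3 = "real ^ 3"

definition pd :: "3 \<Rightarrow> (R3 \<Rightarrow> real) \<Rightarrow> R3 \<Rightarrow> real" where
  "pd i f x = frechet_derivative f (at x) (axis i 1)"

text \<open>Gradient (dH identified with a vector via the Euclidean metric): components H_i.\<close>
definition grad :: "(R3 \<Rightarrow> real) \<Rightarrow> R3 \<Rightarrow> R3" where
  "grad f x = (\<chi> i. pd i f x)"

definition smooth3 :: "(R3 \<Rightarrow> real) \<Rightarrow> bool" where
  "smooth3 f \<longleftrightarrow> (\<exists>F. f \<in> F \<and>
     (\<forall>g\<in>F. continuous_on UNIV g \<and> (\<forall>x. g differentiable (at x)) \<and> (\<forall>i. pd i g \<in> F)))"

definition poisson_tensor :: "(R3 \<Rightarrow> real ^ 3 ^ 3) \<Rightarrow> bool" where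
  "poisson_tensor P \<longleftrightarrow>
     (\<forall>i j. smooth3 (\<lambda>x. P x $ i $ j)) \<and>
     (\<forall>x i j. P x $ i $ j = - (P x $ j $ i)) \<and>
     (\<forall>x i j k. (\<Sum>l\<in>UNIV.
         P x $ i $ l * pd l (\<lambda>y. P y $ j $ k) x
       + P x $ j $ l * pd l (\<lambda>y. P y $ k $ i) x
       + P x $ k $ l * pd l (\<lambda>y. P y $ i $ j) x) = 0)"

definition gten :: "(R3 \<Rightarrow> real) \<Rightarrow> R3 \<Rightarrow> real ^ 3 ^ 3" where
  "gten H x = (\<chi> i j. grad H x $ i * grad H x $ j
                  - (if i = j then (\<Sum>k\<in>UNIV. grad H x $ k * grad H x $ k) else 0))"

end

theory Submission
  imports Defs
begin

text \<open>
  A skew-symmetric 3\<times>3 matrix acts as \<open>v \<mapsto> p \<times> v\<close> for its axial vector \<open>p\<close>, and the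
  Lagrange identity turns \<open>g dS\<close> into \<open>h \<times> (h \<times> s)\<close> with \<open>h = dH\<close>, \<open>s = dS\<close>. The Casimir
  condition says \<open>p \<times> s = 0\<close>. Then \<open>h \<times> (h \<times> s)\<close> is orthogonal to \<open>p \<times> h\<close>, because
  \<open>(p \<times> h) \<bullet> s = (s \<times> p) \<bullet> h = 0\<close>, so \<open>p \<times> h + h \<times> (h \<times> s) = 0\<close> forces \<open>p \<times> h = 0\<close>.
  Conversely, if \<open>p \<noteq> 0\<close> then \<open>p \<times> h = 0\<close> and \<open>p \<times> s = 0\<close> make \<open>h\<close> and \<open>s\<close> parallel to \<open>p\<close>,
  so \<open>h \<times> s = 0\<close>.
\<close>

unbundle cross3_syntax

definition axial :: "real^3^3 \<Rightarrow> real^3" where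
  "axial M = vector [M$3$2, M$1$3, M$2$1]"

lemma skew_matrix_vector_mult_eq_cross:
  assumes "\<And>i j. M$i$j = - M$j$i"
  shows "M *v v = axial M \<times> v"
proof -
  have "M$i$i = 0" for i using assms[of i i] by simp
  then show ?thesis
    using assms[of 1 2] assms[of 2 3] assms[of 3 1]
    by (simp add: vec_eq_iff forall_3 matrix_vector_mult_def sum_3 cross_components axial_def)
qed

lemma axial_eq_0_iff:
  assumes "\<And>i j. M$i$j = - M$j$i"
  shows "axial M = 0 \<longleftrightarrow> M = 0"
  using skew_matrix_vector_mult_eq_cross[OF assms]
  by (metis cross_basis_nonzero cross_zero_left matrix_vector_mult_0 matrix_eq)

lemma gten_mult_vector: "gten H x *v s = grad H x \<times> (grad H x \<times> s)"
  by (simp add: gten_def Lagrange vec_eq_iff forall_3 matrix_vector_mult_def sum_3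
      inner_vec_def algebra_simps)

lemma cross_eq_0_if_add_cross_cross_eq_0:
  fixes p h s :: "real^3"
  assumes "p \<times> s = 0" and "p \<times> h + h \<times> (h \<times> s) = 0"
  shows "p \<times> h = 0"
proof -
  have "(p \<times> h) \<bullet> s = (s \<times> p) \<bullet> h" by (metis cross_triple)
  also have "\<dots> = 0" using assms(1) by (metis cross_skew inner_zero_left neg_equal_0_iff_equal)
  finally have "(p \<times> h) \<bullet> s = 0" .
  then have "(p \<times> h) \<bullet> (h \<times> (h \<times> s)) = 0"
    by (simp add: Lagrange inner_diff_right dot_cross_self)
  then have "(p \<times> h) \<bullet> (p \<times> h) = 0"
    using assms(2) by (metis eq_neg_iff_add_eq_0 inner_minus_right neg_0_equal_iff_equal)
  then show ?thesis by simp
qed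

lemma cross_eq_0_if_parallel:
  fixes p h s :: "real^3"
  assumes "p \<noteq> 0" and "p \<times> s = 0" and "p \<times> h = 0"
  shows "h \<times> s = 0"
proof -
  have "(p \<bullet> s) *\<^sub>R p = (p \<bullet> p) *\<^sub>R s"
    using Lagrange[of p p s] assms(2) by simp
  moreover have "p \<bullet> p \<noteq> 0" using assms(1) by simp
  ultimately have "s = ((p \<bullet> s) / (p \<bullet> p)) *\<^sub>R p"
    by (metis divide_inverse_commute scaleR_scaleR scaleR_one left_inverse)
  then show ?thesis
    using assms(3) by (metis cross_mult_right cross_skew scale_eq_0_iff)
qed

theorem mainTheorem4:
  fixes P :: "R3 \<Rightarrow> real ^ 3 ^ 3" and H S :: "R3 \<Rightarrow> real"
  assumes "poisson_tensor P"
    and "smooth3 H"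
    and "smooth3 S"
    and "\<forall>x. P x *v grad S x = 0"
  shows "\<forall>x. P x \<noteq> 0 \<longrightarrow>
           ((P x *v grad H x + gten H x *v grad S x = 0) \<longleftrightarrow> (P x *v grad H x = 0))"
proof (intro allI impI)
  fix x
  assume "P x \<noteq> 0"
  have skew: "\<And>i j. P x$i$j = - P x$j$i"
    using assms(1) unfolding poisson_tensor_def by blast
  define p where "p = axial (P x)"
  have "p \<noteq> 0" using \<open>P x \<noteq> 0\<close> axial_eq_0_iff[OF skew] by (simp add: p_def)
  have mult_P: "\<And>v. P x *v v = p \<times> v"
    unfolding p_def by (rule skew_matrix_vector_mult_eq_cross[OF skew])
  have "p \<times> grad S x = 0" using assms(4) mult_P by metis
  then show "(P x *v grad H x + gten H x *v grad S x = 0) \<longleftrightarrow> (P x *v grad H x = 0)"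
    unfolding mult_P gten_mult_vector
    using cross_eq_0_if_add_cross_cross_eq_0 cross_eq_0_if_parallel[OF \<open>p \<noteq> 0\<close>]
    by (metis add_0 cross_zero_right)
qed

end
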